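(* Let $N$ be a positive integer, $t$ a nonnegative integer with $2t<N$, and $\epsilon_s>0$. Let $\mathcal A=\{x_1\le x_2\le\cdots\le x_N\}$ be $N$ real data points in an interval $[x_L,x_U]$, with $R=x_U-x_L$, and suppose the $N-2t$ centermost data points cover a range of length at least $d$, where $0<d<R$. Generate a split point $r\in[x_L,x_U]$ by the exponential mechanism with density (with respect to Lebesgue measure on $[x_L,x_U]$) proportional to $\exp\{\epsilon_s q(r)/2\}$, where $$q(r)=-\Big|\,|\mathcal A\cap[x_L,r)|-|\mathcal A\cap[r,x_U]|\,\Big|,$$ and split $\mathcal A$ into the blocks $\mathcal A\cap[x_L,r)$ and $\mathcal A\cap[r,x_U]$. Then the smaller of the two resulting blocks contains at least $t$ data points with probability at least $$\frac{d}{Re^{-\epsilon_s}+d(1-e^{-\epsilon_s})}.$$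
   Context: This randomized choice of $r$ is an $\epsilon_s$-differentially private version of splitting at the median (the score $q$ has sensitivity $1$). *)

theory Defs
  imports "HOL-Analysis.Analysis"
begin

text \<open>Data points are x 0, ..., x (N-1) (a multiset of reals, counted with multiplicity).
  Block sizes |A \<inter> [xL, r)| and |A \<inter> [r, xU]|.\<close>

definition left_count :: "(nat \<Rightarrow> real) \<Rightarrow> nat \<Rightarrow> real \<Rightarrow> real \<Rightarrow> nat" where
  "left_count x N xL r = card {i \<in> {..<N}. xL \<le> x i \<and> x i < r}"

definition right_count :: "(nat \<Rightarrow> real) \<Rightarrow> nat \<Rightarrow> real \<Rightarrow> real \<Rightarrow> nat" where
  "right_count x N xU r = card {i \<in> {..<N}. r \<le> x i \<and> x i \<le> xU}"

definition split_score :: "(nat \<Rightarrow> real) \<Rightarrow> nat \<Rightarrow> real \<Rightarrow> real \<Rightarrow> real \<Rightarrow> real" where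
  "split_score x N xL xU r =
     - \<bar>real (left_count x N xL r) - real (right_count x N xU r)\<bar>"

definition mech_weight :: "real \<Rightarrow> (nat \<Rightarrow> real) \<Rightarrow> nat \<Rightarrow> real \<Rightarrow> real \<Rightarrow> real \<Rightarrow> real" where
  "mech_weight eps x N xL xU r = exp (eps * split_score x N xL xU r / 2)"

definition mech_prob ::
  "real \<Rightarrow> (nat \<Rightarrow> real) \<Rightarrow> nat \<Rightarrow> real \<Rightarrow> real \<Rightarrow> (real \<Rightarrow> bool) \<Rightarrow> real" where
  "mech_prob eps x N xL xU P =
     (LINT r : {xL..xU} \<inter> {r. P r} | lborel. mech_weight eps x N xL xU r) /
     (LINT r : {xL..xU} | lborel. mech_weight eps x N xL xU r)"

end

theory Submission
  imports Defs
begin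

text \<open>All data points lie in \<open>[xL, xU]\<close>, so the two block sizes add up to \<open>N\<close> for every
  split point. Hence the score is at least \<open>-(N - 2t)\<close> at balanced split points (both blocks
  of size at least \<open>t\<close>) and at most \<open>-(N - 2t + 2)\<close> elsewhere: the weight drops by at least
  the factor \<open>exp (-\<epsilon>)\<close> off the balanced set. That set contains \<open>(x t, x (N - 1 - t)]\<close>, so its
  length \<open>g\<close> is at least \<open>d\<close>, and its probability is at least \<open>g / (g + (R - g) exp (-\<epsilon>))\<close>,
  which increases with \<open>g\<close>.\<close>

lemma weighted_fraction_lower_bound:
  fixes a b d g R e m :: real
  assumes "0 < d" "d \<le> g" "g \<le> R" "0 \<le> e" "0 < m"
    and "g * m \<le> a" "0 \<le> b" "b \<le> (R - g) * (m * e)"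
  shows "d / (d + (R - d) * e) \<le> a / (a + b)"
proof -
  have "d * b \<le> d * ((R - g) * (m * e))"
    using assms by (simp add: mult_left_mono)
  also have "\<dots> \<le> g * (R - d) * (m * e)"
  proof -
    have "d * (R - g) \<le> g * (R - d)"
      using assms by (simp add: algebra_simps mult_right_mono)
    then show ?thesis
      using assms by (simp add: mult_right_mono mult.assoc[symmetric])
  qed
  also have "\<dots> = (g * m) * ((R - d) * e)" by (simp add: algebra_simps)
  also have "\<dots> \<le> a * ((R - d) * e)"
    using assms by (intro mult_right_mono) auto
  finally have "d * (a + b) \<le> a * (d + (R - d) * e)"
    by (simp add: algebra_simps)
  moreover have "0 < d + (R - d) * e"
    using assms by (intro add_pos_nonneg) auto
  moreover have "0 < a + b"
    using assms mult_pos_pos[of g m] by linarith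
  ultimately show ?thesis
    by (simp add: divide_le_eq le_divide_eq mult.commute)
qed

lemma set_integral_ratio_lower_bound:
  fixes M :: "'a measure" and w :: "'a \<Rightarrow> real"
  assumes I: "I \<in> sets M" "emeasure M I < \<infinity>" and S: "S \<in> sets M" "S \<subseteq> I"
    and w_int: "set_integrable M I w"
    and "0 < d" "d \<le> measure M S" "0 < m" "0 \<le> e"
    and w_good: "\<And>r. r \<in> S \<Longrightarrow> m \<le> w r"
    and w_bad: "\<And>r. r \<in> I - S \<Longrightarrow> 0 \<le> w r \<and> w r \<le> m * e"
  shows "d / (d + (measure M I - d) * e) \<le> (LINT r:S|M. w r) / (LINT r:I|M. w r)"
proof -
  define g where "g = measure M S"
  have diff_sets: "I - S \<in> sets M" using I S by auto
  have fin: "emeasure M S \<noteq> \<infinity>" "emeasure M (I - S) \<noteq> \<infinity>"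
    using I S diff_sets emeasure_mono[of S I M] emeasure_mono[of "I - S" I M] by auto
  have const_int: "set_integrable M A (\<lambda>_. c)" if "A \<in> sets M" "emeasure M A \<noteq> \<infinity>" for A c
    using that unfolding set_integrable_def by (simp add: top.not_eq_extremum)
  have meas_bad: "measure M (I - S) = measure M I - g"
    using I S unfolding g_def by (intro measure_Diff) auto
  have "g * m = (LINT r:S|M. m)"
    using set_integral_const[OF S(1) fin(1), of m] unfolding g_def by simp
  also have "\<dots> \<le> (LINT r:S|M. w r)"
    using w_good
    by (intro set_integral_mono const_int set_integrable_subset[OF w_int S]) (use S fin in auto)
  finally have good: "g * m \<le> (LINT r:S|M. w r)" .
  have "(LINT r:I-S|M. w r) \<le> (LINT r:I-S|M. m * e)"
    using w_bad
    by (intro set_integral_mono const_int set_integrable_subset[OF w_int diff_sets]) (use diff_sets fin in auto)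
  also have "\<dots> = (measure M I - g) * (m * e)"
    using set_integral_const[OF diff_sets fin(2), of "m * e"] meas_bad by simp
  finally have bad: "(LINT r:I-S|M. w r) \<le> (measure M I - g) * (m * e)" .
  have bad_nonneg: "0 \<le> (LINT r:I-S|M. w r)"
    using w_bad unfolding set_lebesgue_integral_def
    by (intro integral_nonneg_AE) (auto simp: indicator_def)
  have split: "(LINT r:I|M. w r) = (LINT r:S|M. w r) + (LINT r:I-S|M. w r)"
    using set_integral_Un[of S "I - S" M w] S set_integrable_subset[OF w_int] diff_sets
    by (simp add: Un_absorb1)
  have "g \<le> measure M I"
    using I S fin unfolding g_def by (intro measure_mono_fmeasurable) (auto simp: fmeasurable_def)
  then show ?thesis
    unfolding split using assms good bad bad_nonneg
    by (intro weighted_fraction_lower_bound[of d g]) (auto simp: g_def)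
qed

lemma real_card_filter_lessThan:
  "real (card {i \<in> {..<N::nat}. P i}) = (\<Sum>i<N. if P i then 1 else 0)"
  by (simp add: sum.inter_filter[symmetric])

lemma left_count_measurable: "(\<lambda>r. real (left_count x N xL r)) \<in> borel_measurable borel"
  unfolding left_count_def real_card_filter_lessThan by measurable

lemma right_count_measurable: "(\<lambda>r. real (right_count x N xU r)) \<in> borel_measurable borel"
  unfolding right_count_def real_card_filter_lessThan by measurable

lemma mech_weight_measurable: "mech_weight eps x N xL xU \<in> borel_measurable borel"
  unfolding mech_weight_def split_score_def
  using left_count_measurable[of x N xL] right_count_measurable[of x N xU] by measurable

lemma set_integrable_mech_weight_Icc:
  assumes "0 \<le> eps"
  shows "set_integrable lborel {a..b} (mech_weight eps x N xL xU)"
proof (rule set_integrable_bound[where f = "\<lambda>_. 1::real"])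
  show "set_integrable lborel {a..b} (\<lambda>_. 1::real)"
    by (rule borel_integrable_atLeastAtMost') auto
  show "set_borel_measurable lborel {a..b} (mech_weight eps x N xL xU)"
    unfolding set_borel_measurable_def using mech_weight_measurable by measurable
  show "AE r in lborel. r \<in> {a..b} \<longrightarrow> norm (mech_weight eps x N xL xU r) \<le> norm (1::real)"
    using assms by (simp add: mech_weight_def split_score_def mult_nonneg_nonneg)
qed

lemma left_count_plus_right_count:
  assumes range: "\<And>i. i < N \<Longrightarrow> xL \<le> x i \<and> x i \<le> xU"
  shows "left_count x N xL r + right_count x N xU r = N"
proof -
  let ?L = "{i \<in> {..<N}. xL \<le> x i \<and> x i < r}" and ?R = "{i \<in> {..<N}. r \<le> x i \<and> x i \<le> xU}"
  have "?L \<union> ?R = {..<N}"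
    using range by force
  moreover have "card (?L \<union> ?R) = card ?L + card ?R"
    by (rule card_Un_disjoint) auto
  ultimately show ?thesis
    unfolding left_count_def right_count_def by simp
qed

lemma left_count_gt:
  assumes sorted: "\<And>i j. i \<le> j \<Longrightarrow> j < N \<Longrightarrow> x i \<le> x j"
    and range: "\<And>i. i < N \<Longrightarrow> xL \<le> x i \<and> x i \<le> xU"
    and "t < N" "x t < r"
  shows "t < left_count x N xL r"
proof -
  have "{..t} \<subseteq> {i \<in> {..<N}. xL \<le> x i \<and> x i < r}"
  proof
    fix i assume "i \<in> {..t}"
    then have "i < N" "x i \<le> x t" using sorted[of i t] \<open>t < N\<close> by auto
    then show "i \<in> {i \<in> {..<N}. xL \<le> x i \<and> x i < r}" using range \<open>x t < r\<close> by force
  qed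
  then have "card {..t} \<le> left_count x N xL r"
    unfolding left_count_def by (intro card_mono) auto
  then show ?thesis by simp
qed

lemma right_count_gt:
  assumes sorted: "\<And>i j. i \<le> j \<Longrightarrow> j < N \<Longrightarrow> x i \<le> x j"
    and range: "\<And>i. i < N \<Longrightarrow> xL \<le> x i \<and> x i \<le> xU"
    and "t < N" "r \<le> x (N - 1 - t)"
  shows "t < right_count x N xU r"
proof -
  have "{N - 1 - t..<N} \<subseteq> {i \<in> {..<N}. r \<le> x i \<and> x i \<le> xU}"
  proof
    fix i assume "i \<in> {N - 1 - t..<N}"
    then have "i < N" "x (N - 1 - t) \<le> x i" using sorted[of "N - 1 - t" i] by auto
    then show "i \<in> {i \<in> {..<N}. r \<le> x i \<and> x i \<le> xU}" using range \<open>r \<le> x (N - 1 - t)\<close> by force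
  qed
  then have "card {N - 1 - t..<N} \<le> right_count x N xU r"
    unfolding right_count_def by (intro card_mono) auto
  then show ?thesis using \<open>t < N\<close> by simp
qed

lemma split_score_ge_if_balanced:
  assumes "\<And>i. i < N \<Longrightarrow> xL \<le> x i \<and> x i \<le> xU"
    and "t \<le> min (left_count x N xL r) (right_count x N xU r)"
  shows "- (real N - 2 * real t) \<le> split_score x N xL xU r"
proof -
  have "real (left_count x N xL r) + real (right_count x N xU r) = real N"
    using left_count_plus_right_count[OF assms(1)] by (simp only: of_nat_add[symmetric])
  moreover have "real t \<le> real (left_count x N xL r)" "real t \<le> real (right_count x N xU r)"
    using assms(2) by auto
  ultimately show ?thesis
    unfolding split_score_def by linarith
qed

lemma split_score_le_if_unbalanced:
  assumes "\<And>i. i < N \<Longrightarrow> xL \<le> x i \<and> x i \<le> xU"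
    and "min (left_count x N xL r) (right_count x N xU r) < t"
  shows "split_score x N xL xU r \<le> - (real N - 2 * real t + 2)"
proof -
  have "real (left_count x N xL r) + real (right_count x N xU r) = real N"
    using left_count_plus_right_count[OF assms(1)] by (simp only: of_nat_add[symmetric])
  moreover have "real (left_count x N xL r) + 1 \<le> real t \<or> real (right_count x N xU r) + 1 \<le> real t"
    using assms(2) by (auto simp: min_less_iff_disj)
  ultimately show ?thesis
    unfolding split_score_def by linarith
qed

lemma mech_weight_ge_if_balanced:
  assumes "0 \<le> eps" "\<And>i. i < N \<Longrightarrow> xL \<le> x i \<and> x i \<le> xU"
    and "t \<le> min (left_count x N xL r) (right_count x N xU r)"
  shows "exp (- eps * (real N - 2 * real t) / 2) \<le> mech_weight eps x N xL xU r"
  using mult_left_mono[OF split_score_ge_if_balanced[OF assms(2,3)] assms(1)]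
  unfolding mech_weight_def by (simp add: algebra_simps)

lemma mech_weight_le_if_unbalanced:
  assumes "0 \<le> eps" "\<And>i. i < N \<Longrightarrow> xL \<le> x i \<and> x i \<le> xU"
    and "min (left_count x N xL r) (right_count x N xU r) < t"
  shows "mech_weight eps x N xL xU r \<le> exp (- eps * (real N - 2 * real t) / 2) * exp (- eps)"
proof -
  have "mech_weight eps x N xL xU r \<le> exp (- eps * (real N - 2 * real t + 2) / 2)"
    using mult_left_mono[OF split_score_le_if_unbalanced[OF assms(2,3)] assms(1)]
    unfolding mech_weight_def by (simp add: algebra_simps)
  also have "\<dots> = exp (- eps * (real N - 2 * real t) / 2) * exp (- eps)"
    by (simp add: exp_add[symmetric] field_simps)
  finally show ?thesis .
qed

lemma sets_balanced_split_points:
  "{r. t \<le> min (left_count x N xL r) (right_count x N xU r)} \<in> sets borel"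
proof -
  have "{r. t \<le> min (left_count x N xL r) (right_count x N xU r)} =
        {r \<in> space borel. real t \<le> real (left_count x N xL r) \<and> real t \<le> real (right_count x N xU r)}"
    by auto
  also have "\<dots> \<in> sets borel"
    using left_count_measurable[of x N xL] right_count_measurable[of x N xU] by measurable
  finally show ?thesis .
qed

lemma measure_balanced_split_points_ge:
  assumes sorted: "\<And>i j. i \<le> j \<Longrightarrow> j < N \<Longrightarrow> x i \<le> x j"
    and range: "\<And>i. i < N \<Longrightarrow> xL \<le> x i \<and> x i \<le> xU"
    and "t < N"
  shows "x (N - 1 - t) - x t \<le>
    measure lborel ({xL..xU} \<inter> {r. t \<le> min (left_count x N xL r) (right_count x N xU r)})"
    (is "_ \<le> measure lborel ?good")
proof (cases "x t \<le> x (N - 1 - t)")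
  case True
  have centre: "{x t<..x (N - 1 - t)} \<subseteq> ?good"
  proof
    fix r assume r: "r \<in> {x t<..x (N - 1 - t)}"
    then have "r \<in> {xL..xU}"
      using range[of t] range[of "N - 1 - t"] \<open>t < N\<close> by auto
    moreover have "t < left_count x N xL r" "t < right_count x N xU r"
      using r left_count_gt[OF sorted range \<open>t < N\<close>] right_count_gt[OF sorted range \<open>t < N\<close>]
      by simp_all
    ultimately show "r \<in> ?good" by simp
  qed
  have "?good \<in> sets lborel"
    using sets_balanced_split_points by simp
  then have "?good \<in> fmeasurable lborel"
    by (rule fmeasurableI2[of "{xL..xU}", rotated 2]) (auto simp: fmeasurable_def emeasure_lborel_Icc_eq)
  with centre have "measure lborel {x t<..x (N - 1 - t)} \<le> measure lborel ?good"
    by (intro measure_mono_fmeasurable) simp_all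
  then show ?thesis
    using True by simp
next
  case False
  then show ?thesis
    using measure_nonneg[of lborel ?good] by linarith
qed

lemma mech_prob_balanced_ge:
  assumes "0 \<le> eps" "xL \<le> xU"
    and range: "\<And>i. i < N \<Longrightarrow> xL \<le> x i \<and> x i \<le> xU"
    and "0 < d"
    and good_measure:
      "d \<le> measure lborel ({xL..xU} \<inter> {r. t \<le> min (left_count x N xL r) (right_count x N xU r)})"
  shows "d / (d + (xU - xL - d) * exp (- eps)) \<le>
    mech_prob eps x N xL xU (\<lambda>r. t \<le> min (left_count x N xL r) (right_count x N xU r))"
proof -
  define good where
    "good = {xL..xU} \<inter> {r. t \<le> min (left_count x N xL r) (right_count x N xU r)}"
  have "d / (d + (measure lborel {xL..xU} - d) * exp (- eps)) \<le>
      (LINT r:good|lborel. mech_weight eps x N xL xU r) /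
      (LINT r:{xL..xU}|lborel. mech_weight eps x N xL xU r)"
  proof (rule set_integral_ratio_lower_bound[where m = "exp (- eps * (real N - 2 * real t) / 2)"])
    show "good \<in> sets lborel"
      unfolding good_def using sets_balanced_split_points by simp
    show "good \<subseteq> {xL..xU}"
      unfolding good_def by blast
    show "emeasure lborel {xL..xU} < \<infinity>"
      by (simp add: emeasure_lborel_Icc_eq)
    show "set_integrable lborel {xL..xU} (mech_weight eps x N xL xU)"
      using \<open>0 \<le> eps\<close> by (rule set_integrable_mech_weight_Icc)
    show "exp (- eps * (real N - 2 * real t) / 2) \<le> mech_weight eps x N xL xU r"
      if "r \<in> good" for r
      using that \<open>0 \<le> eps\<close> by (intro mech_weight_ge_if_balanced range) (simp_all add: good_def)
    show "0 \<le> mech_weight eps x N xL xU r \<and>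
        mech_weight eps x N xL xU r \<le> exp (- eps * (real N - 2 * real t) / 2) * exp (- eps)"
      if "r \<in> {xL..xU} - good" for r
    proof
      show "0 \<le> mech_weight eps x N xL xU r"
        by (simp add: mech_weight_def)
      have "min (left_count x N xL r) (right_count x N xU r) < t"
        using that by (auto simp: good_def)
      then show "mech_weight eps x N xL xU r \<le> exp (- eps * (real N - 2 * real t) / 2) * exp (- eps)"
        using \<open>0 \<le> eps\<close> by (intro mech_weight_le_if_unbalanced range) simp_all
    qed
  qed (use good_measure \<open>0 < d\<close> in \<open>simp_all add: good_def\<close>)
  then show ?thesis
    using \<open>xL \<le> xU\<close> unfolding mech_prob_def good_def by simp
qed

theorem mainTheorem3:
  fixes N t :: nat and eps xL xU R d :: real and x :: "nat \<Rightarrow> real"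
  assumes "N > 0" and "2 * t < N" and "eps > 0"
    and sorted: "\<And>i j. i \<le> j \<Longrightarrow> j < N \<Longrightarrow> x i \<le> x j"
    and range: "\<And>i. i < N \<Longrightarrow> xL \<le> x i \<and> x i \<le> xU"
    and "R = xU - xL"
    and "0 < d" and "d < R"
    and center: "x (N - 1 - t) - x t \<ge> d"
  shows "mech_prob eps x N xL xU
           (\<lambda>r. min (left_count x N xL r) (right_count x N xU r) \<ge> t)
         \<ge> d / (R * exp (- eps) + d * (1 - exp (- eps)))"
proof -
  have "t < N"
    using \<open>2 * t < N\<close> by simp
  have "x (N - 1 - t) - x t \<le>
      measure lborel ({xL..xU} \<inter> {r. t \<le> min (left_count x N xL r) (right_count x N xU r)})"
    by (rule measure_balanced_split_points_ge[OF sorted range \<open>t < N\<close>])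
  with center have "d / (d + (xU - xL - d) * exp (- eps)) \<le>
      mech_prob eps x N xL xU (\<lambda>r. t \<le> min (left_count x N xL r) (right_count x N xU r))"
    using \<open>eps > 0\<close> \<open>R = xU - xL\<close> \<open>0 < d\<close> \<open>d < R\<close>
    by (intro mech_prob_balanced_ge range) simp_all
  moreover have "d + (xU - xL - d) * exp (- eps) = R * exp (- eps) + d * (1 - exp (- eps))"
    by (simp add: \<open>R = xU - xL\<close> algebra_simps)
  ultimately show ?thesis
    by simp
qed

end
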